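(* Let $\mathbf A$ be a real symmetric positive definite matrix indexed by the mesh $\mathcal M$, in the FIND setting described in the context. Then for every leaf cluster $\mathcal C_r$ of $\mathcal T$, every consistent ordering of $\mathcal T_r^+$ and every node $g$ of $\mathcal T_r^+$, the matrix $\mathcal U_g=\mathbf A_g(\mathcal B_g,\mathcal B_g)-\mathbf A_g(\mathcal B_g,\mathcal S_g)\mathbf A_g(\mathcal S_g,\mathcal S_g)^{-1}\mathbf A_g(\mathcal S_g,\mathcal B_g)$ is positive definite.
   Context: Setting (FIND). $\mathcal M$ is a finite set of mesh nodes and $\mathbf A$ is a matrix with rows and columns indexed by $\mathcal M$, structurally symmetric ($A_{ij}\neq 0\iff A_{ji}\neq 0$). For a matrix $\mathbf X$ and $X,Y\subseteq\mathcal M$, $\mathbf X(X,Y)$ is the submatrix with rows in $X$ and columns in $Y$. For a cluster $\mathcal C\subseteq\mathcal M$, its boundary set is $\mathcal B_{\mathcal C}=\{i\in\mathcal C: A_{ij}\neq 0\text{ for some } j\notin\mathcal C\}$ and its inner set is $\mathcal I_{\mathcal C}=\mathcal C\setminus\mathcal B_{\mathcal C}$; for a cluster $\mathcal C_g$ write $\mathcal B_g,\mathcal I_g$. Cluster tree: $\mathcal T$ is a rooted binary tree of clusters with root $\mathcal M$, each non-leaf cluster the disjoint union of its two children. For a leaf $\mathcal C_r$, let $r=a_0,\dots,a_d$ be the path to the root and $b_k$ the sibling of $a_k$. The augmented tree $\mathcal T_r^+$ has root $\mathcal C_{-r}=\mathcal M\setminus\mathcal C_r$; for $0\le k\le d-2$,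 $\mathcal C_{-a_k}=\mathcal M\setminus\mathcal C_{a_k}$ has children $\mathcal C_{b_k}$ and $\mathcal C_{-a_{k+1}}$, where $\mathcal C_{-a_{d-1}}$ is identified with $\mathcal C_{b_{d-1}}$ (equal sets); each basic cluster $\mathcal C_{b_k}$ carries its subtree from $\mathcal T$. Private inner nodes: $\mathcal S_g=\mathcal I_g$ for a leaf $g$ of $\mathcal T_r^+$, and $\mathcal S_g=\mathcal I_g\setminus(\mathcal I_i\cup\mathcal I_j)$ if $g$ has children $i,j$. Consistent ordering: a total order $g_1,\dots,g_m$ of the nodes of $\mathcal T_r^+$ with every node after all its descendants. Elimination: $\mathbf A_{g_1}=\mathbf A$; for each $g$, $\mathcal L_g=\mathbf A_g(\mathcal B_g,\mathcal S_g)\mathbf A_g(\mathcal S_g,\mathcal S_g)^{-1}$, $\mathbf L_g$ is the identity on $\mathcal M$ except $\mathbf L_g(\mathcal B_g,\mathcal S_g)=\mathcal L_g$, $\mathbf A_{g+}=\mathbf L_g^{-1}\mathbf A_g$, and $\mathbf A_{g_{t+1}}=\mathbf A_{g_t+}$ (block Gaussian elimination of the columns $\mathcal S_g$). *)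

theory Defs
  imports Complex_Main
begin

text \<open>Matrices indexed by the mesh are functions of type 'a => 'a => real; only the
entries with indices in the relevant finite index sets are ever used.\<close>

type_synonym 'a mat = "'a \<Rightarrow> 'a \<Rightarrow> real"

definition mat_mult_on :: "'a set \<Rightarrow> 'a mat \<Rightarrow> 'a mat \<Rightarrow> 'a mat" where
  "mat_mult_on K X Y = (\<lambda>i j. \<Sum>k\<in>K. X i k * Y k j)"

definition mat_inv_on :: "'a set \<Rightarrow> 'a mat \<Rightarrow> 'a mat" where
  "mat_inv_on K X = (SOME Y.
      (\<forall>i\<in>K. \<forall>j\<in>K. (\<Sum>k\<in>K. X i k * Y k j) = (if i = j then 1 else 0)) \<and>
      (\<forall>i\<in>K. \<forall>j\<in>K. (\<Sum>k\<in>K. Y i k * X k j) = (if i = j then 1 else 0)))"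

definition pos_def_on :: "'a set \<Rightarrow> 'a mat \<Rightarrow> bool" where
  "pos_def_on K X \<longleftrightarrow>
     (\<forall>i\<in>K. \<forall>j\<in>K. X i j = X j i) \<and>
     (\<forall>x :: 'a \<Rightarrow> real. (\<exists>i\<in>K. x i \<noteq> 0) \<longrightarrow> (\<Sum>i\<in>K. \<Sum>j\<in>K. x i * X i j * x j) > 0)"

definition bnd :: "'a set \<Rightarrow> 'a mat \<Rightarrow> 'a set \<Rightarrow> 'a set" where
  "bnd M A C = {i \<in> C. \<exists>j \<in> M - C. A i j \<noteq> 0}"

definition inner :: "'a set \<Rightarrow> 'a mat \<Rightarrow> 'a set \<Rightarrow> 'a set" where
  "inner M A C = C - bnd M A C"

datatype 'a ctree = CLeaf "'a set" | CNode "'a set" "'a ctree" "'a ctree"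

fun cl :: "'a ctree \<Rightarrow> 'a set" where
  "cl (CLeaf C) = C"
| "cl (CNode C l r) = C"

fun wf_ctree :: "'a ctree \<Rightarrow> bool" where
  "wf_ctree (CLeaf C) = True"
| "wf_ctree (CNode C l r) =
     (cl l \<inter> cl r = {} \<and> C = cl l \<union> cl r \<and> wf_ctree l \<and> wf_ctree r)"

definition cluster_tree :: "'a set \<Rightarrow> 'a ctree \<Rightarrow> bool" where
  "cluster_tree M T \<longleftrightarrow> wf_ctree T \<and> cl T = M"

text \<open>Nodes are addressed by paths from the root (False = first child, True = second child).\<close>
fun sub :: "'a ctree \<Rightarrow> bool list \<Rightarrow> 'a ctree option" where
  "sub t [] = Some t"
| "sub (CLeaf C) (c # q) = None"
| "sub (CNode C l r) (c # q) = sub (if c then r else l) q"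

definition nodes :: "'a ctree \<Rightarrow> bool list set" where
  "nodes t = {p. sub t p \<noteq> None}"

definition is_leaf_path :: "'a ctree \<Rightarrow> bool list \<Rightarrow> bool" where
  "is_leaf_path t p \<longleftrightarrow> (\<exists>C. sub t p = Some (CLeaf C))"

fun child :: "bool \<Rightarrow> 'a ctree \<Rightarrow> 'a ctree" where
  "child c (CNode C l r) = (if c then r else l)"
| "child c (CLeaf C) = CLeaf C"

text \<open>Augmented tree. aug_acc M t q O: t is the current node a_k on the path to the leaf
(remaining path q), O is the already built tree with cluster M - C_{a_k}.
The node C_{-a_{k+1}} = M - C_{a_{k+1}} gets the children C_{b_{k+1}}... more precisely:
when descending from t to its child a = child c t with sibling s = child (\<not>c) t,
the new node M - C_a has children s (basic cluster with its subtree of T) and O.\<close>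
fun aug_acc :: "'a set \<Rightarrow> 'a ctree \<Rightarrow> bool list \<Rightarrow> 'a ctree \<Rightarrow> 'a ctree" where
  "aug_acc M t [] Ot = Ot"
| "aug_acc M t (c # q) Ot =
     aug_acc M (child c t) q (CNode (M - cl (child c t)) (child (\<not> c) t) Ot)"

text \<open>Augmented tree T_r^+ for the leaf reached by path p. At the top level the node
C_{-a_{d-1}} is identified with the sibling subtree C_{b_{d-1}}. (For the degenerate
case p = [] we take the single node M - C_r.)\<close>
fun aug :: "'a set \<Rightarrow> 'a ctree \<Rightarrow> bool list \<Rightarrow> 'a ctree" where
  "aug M T [] = CLeaf (M - cl T)"
| "aug M T (c # q) = aug_acc M (child c T) q (child (\<not> c) T)"

definition consistent_ordering :: "'a ctree \<Rightarrow> bool list list \<Rightarrow> bool" where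
  "consistent_ordering U gs \<longleftrightarrow>
     distinct gs \<and> set gs = nodes U \<and>
     (\<forall>i < length gs. \<forall>j < length gs. (\<exists>x. x \<noteq> [] \<and> gs ! j = gs ! i @ x) \<longrightarrow> j < i)"

definition Cg :: "'a ctree \<Rightarrow> bool list \<Rightarrow> 'a set" where
  "Cg U g = cl (the (sub U g))"

definition Bg :: "'a set \<Rightarrow> 'a mat \<Rightarrow> 'a ctree \<Rightarrow> bool list \<Rightarrow> 'a set" where
  "Bg M A U g = bnd M A (Cg U g)"

definition Ig :: "'a set \<Rightarrow> 'a mat \<Rightarrow> 'a ctree \<Rightarrow> bool list \<Rightarrow> 'a set" where
  "Ig M A U g = inner M A (Cg U g)"

definition Sg :: "'a set \<Rightarrow> 'a mat \<Rightarrow> 'a ctree \<Rightarrow> bool list \<Rightarrow> 'a set" where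
  "Sg M A U g = (if is_leaf_path U g then Ig M A U g
                 else Ig M A U g - (Ig M A U (g @ [False]) \<union> Ig M A U (g @ [True])))"

text \<open>One elimination step at node g, applied to the current matrix X = A_g
(A is the original matrix, used for boundary sets).\<close>
definition elim_step :: "'a set \<Rightarrow> 'a mat \<Rightarrow> 'a ctree \<Rightarrow> 'a mat \<Rightarrow> bool list \<Rightarrow> 'a mat" where
  "elim_step M A U X g =
     (let B = Bg M A U g; S = Sg M A U g;
          Lc = mat_mult_on S X (mat_inv_on S X);
          L = (\<lambda>i j. if i \<in> B \<and> j \<in> S then Lc i j else (if i = j then 1 else 0))
      in mat_mult_on M (mat_inv_on M L) X)"

text \<open>A_{g_{t+1}} for the ordering gs (t counted from 0: A_{g_1} = A).\<close>
definition A_at :: "'a set \<Rightarrow> 'a mat \<Rightarrow> 'a ctree \<Rightarrow> bool list list \<Rightarrow> nat \<Rightarrow> 'a mat" where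
  "A_at M A U gs t = foldl (elim_step M A U) A (take t gs)"

definition schur_U :: "'a set \<Rightarrow> 'a mat \<Rightarrow> 'a ctree \<Rightarrow> 'a mat \<Rightarrow> bool list \<Rightarrow> 'a mat" where
  "schur_U M A U X g =
     (let S = Sg M A U g
      in (\<lambda>i j. X i j - (\<Sum>k\<in>S. \<Sum>l\<in>S. X i k * mat_inv_on S X k l * X l j)))"

end

theory Submission
  imports Defs
begin

text \<open>Every elimination step applies row operations only, so on the set R of indices not yet
  eliminated the current matrix stays congruent to A: its rows R are those of P A with
  P(R,R) = I and its columns already eliminated vanish, whence X(R,R) = P(R,M) A P(R,M)^T is
  positive definite. The boundary B_g meets no private set eliminated before g, and after
  eliminating S_g the block on B_g is exactly U_g. The subtle point is that the step at g
  rewrites only the rows B_g, so the columns S_g must already vanish in every other remaining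
  row; this holds because an inner node of a cluster is coupled only within the cluster, a
  sparsity that survives elimination since the ordering processes clusters bottom up.\<close>

section \<open>Positive definite matrices on index sets\<close>

lemma sum_kronecker_left [simp]:
  "finite K \<Longrightarrow> (\<Sum>k\<in>K. (if i = k then 1 else 0) * f k) = (if i \<in> K then f i else (0::real))"
  by (simp add: if_distrib[of "\<lambda>c. c * _"] cong: if_cong)

lemma sum_kronecker_right [simp]:
  "finite K \<Longrightarrow> (\<Sum>k\<in>K. f k * (if k = j then 1 else 0)) = (if j \<in> K then f j else (0::real))"
  by (simp add: if_distrib[of "\<lambda>c. _ * c"] cong: if_cong)

lemma sum_mult_sum_swap:
  "(\<Sum>k\<in>K. f k * (\<Sum>l\<in>L. g k l * h l)) = (\<Sum>l\<in>L. (\<Sum>k\<in>K. f k * g k l) * (h l :: real))"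
  by (simp add: sum_distrib_left sum_distrib_right mult.assoc sum.swap[of _ K])

lemma sum_swap_pairs:
  "(\<Sum>i\<in>I. \<Sum>j\<in>J. \<Sum>k\<in>K. \<Sum>l\<in>L. f i j k l)
 = (\<Sum>k\<in>K. \<Sum>l\<in>L. \<Sum>i\<in>I. \<Sum>j\<in>J. (f i j k l :: real))"
proof -
  have "(\<Sum>i\<in>I. \<Sum>j\<in>J. \<Sum>k\<in>K. \<Sum>l\<in>L. f i j k l) = (\<Sum>i\<in>I. \<Sum>k\<in>K. \<Sum>j\<in>J. \<Sum>l\<in>L. f i j k l)"
    by (rule sum.cong[OF refl], rule sum.swap)
  also have "\<dots> = (\<Sum>i\<in>I. \<Sum>k\<in>K. \<Sum>l\<in>L. \<Sum>j\<in>J. f i j k l)"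
    by (rule sum.cong[OF refl], rule sum.cong[OF refl], rule sum.swap)
  also have "\<dots> = (\<Sum>k\<in>K. \<Sum>i\<in>I. \<Sum>l\<in>L. \<Sum>j\<in>J. f i j k l)"
    by (rule sum.swap)
  also have "\<dots> = (\<Sum>k\<in>K. \<Sum>l\<in>L. \<Sum>i\<in>I. \<Sum>j\<in>J. f i j k l)"
    by (rule sum.cong[OF refl], rule sum.swap)
  finally show ?thesis .
qed

definition inverse_on :: "'a set \<Rightarrow> 'a mat \<Rightarrow> 'a mat \<Rightarrow> bool" where
  "inverse_on K X Y \<longleftrightarrow>
      (\<forall>i\<in>K. \<forall>j\<in>K. (\<Sum>k\<in>K. X i k * Y k j) = (if i = j then 1 else 0)) \<and>
      (\<forall>i\<in>K. \<forall>j\<in>K. (\<Sum>k\<in>K. Y i k * X k j) = (if i = j then 1 else 0))"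

lemma inverse_on_mat_inv_on:
  assumes "inverse_on K X Y"
  shows "inverse_on K X (mat_inv_on K X)"
proof -
  have "mat_inv_on K X = (SOME Y. inverse_on K X Y)"
    unfolding mat_inv_on_def inverse_on_def ..
  with someI[of "inverse_on K X", OF assms] show ?thesis
    by simp
qed

lemma left_inverse_eq_right_inverse_on:
  fixes X Y Z :: "'a mat"
  assumes K: "finite K"
    and left: "\<forall>i\<in>K. \<forall>j\<in>K. (\<Sum>k\<in>K. Y i k * X k j) = (if i = j then 1 else 0)"
    and right: "\<forall>i\<in>K. \<forall>j\<in>K. (\<Sum>k\<in>K. X i k * Z k j) = (if i = j then 1 else 0)"
    and ij: "i \<in> K" "j \<in> K"
  shows "Y i j = Z i j"
proof -
  have "Y i j = (\<Sum>k\<in>K. Y i k * (\<Sum>l\<in>K. X k l * Z l j))"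
    using K ij right by simp
  also have "\<dots> = (\<Sum>l\<in>K. (\<Sum>k\<in>K. Y i k * X k l) * Z l j)"
    by (rule sum_mult_sum_swap)
  also have "\<dots> = Z i j"
    using K ij left by simp
  finally show ?thesis .
qed

lemma pos_def_on_symmetric: "pos_def_on K Y \<Longrightarrow> i \<in> K \<Longrightarrow> j \<in> K \<Longrightarrow> Y i j = Y j i"
  unfolding pos_def_on_def by blast

lemma pos_def_on_quadratic_pos:
  "pos_def_on K Y \<Longrightarrow> i \<in> K \<Longrightarrow> x i \<noteq> 0 \<Longrightarrow> (\<Sum>i\<in>K. \<Sum>j\<in>K. x i * Y i j * x j) > 0"
  unfolding pos_def_on_def by blast

lemma pos_def_on_diagonal_pos:
  assumes pd: "pos_def_on K Y" and K: "finite K" and a: "a \<in> K"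
  shows "Y a a > 0"
proof -
  let ?x = "\<lambda>k. if k = a then 1 else (0::real)"
  have "(\<Sum>i\<in>K. \<Sum>j\<in>K. ?x i * Y i j * ?x j) = Y a a"
    using K a by (simp add: if_distrib[of "\<lambda>c. c * _"] if_distrib[of "\<lambda>c. _ * c"] cong: if_cong)
  moreover have "(\<Sum>i\<in>K. \<Sum>j\<in>K. ?x i * Y i j * ?x j) > 0"
    by (rule pos_def_on_quadratic_pos[OF pd a]) simp
  ultimately show ?thesis by simp
qed

lemma pos_def_on_cong:
  assumes "\<forall>i\<in>K. \<forall>j\<in>K. Y i j = Z i j" and "pos_def_on K Y"
  shows "pos_def_on K Z"
proof -
  have "(\<Sum>i\<in>K. \<Sum>j\<in>K. x i * Y i j * x j) = (\<Sum>i\<in>K. \<Sum>j\<in>K. x i * Z i j * x j)" for x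
    using assms(1) by (intro sum.cong refl) auto
  then show ?thesis
    using assms unfolding pos_def_on_def by auto
qed

lemma quadratic_form_insert:
  fixes Y :: "'a mat"
  assumes K: "finite K" and a: "a \<notin> K"
    and sym: "\<And>i. i \<in> K \<Longrightarrow> Y i a = Y a i"
  shows "(\<Sum>i\<in>insert a K. \<Sum>j\<in>insert a K. v i * Y i j * v j)
       = v a * Y a a * v a + 2 * v a * (\<Sum>k\<in>K. Y a k * v k) + (\<Sum>i\<in>K. \<Sum>j\<in>K. v i * Y i j * v j)"
proof -
  have "(\<Sum>i\<in>K. v i * Y i a * v a) = v a * (\<Sum>k\<in>K. Y a k * v k)"
    using sym by (simp add: sum_distrib_left mult_ac)
  moreover have "(\<Sum>j\<in>K. v a * Y a j * v j) = v a * (\<Sum>k\<in>K. Y a k * v k)"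
    by (simp add: sum_distrib_left mult_ac)
  ultimately show ?thesis
    using K a by (simp add: sum.distrib algebra_simps)
qed

lemma quadratic_form_minus_rank_one:
  "(\<Sum>i\<in>K. \<Sum>j\<in>K. x i * (Y i j - u i * w j / c) * x j)
 = (\<Sum>i\<in>K. \<Sum>j\<in>K. x i * Y i j * x j) - (\<Sum>i\<in>K. x i * u i) * (\<Sum>j\<in>K. w j * x j) / (c :: real)"
proof -
  have "(\<Sum>i\<in>K. \<Sum>j\<in>K. (x i * u i) * (w j * x j) / c)
      = (\<Sum>i\<in>K. x i * u i) * (\<Sum>j\<in>K. w j * x j) / c"
    by (simp add: sum_divide_distrib[symmetric] sum_product)
  moreover have "(\<Sum>i\<in>K. \<Sum>j\<in>K. x i * (Y i j - u i * w j / c) * x j)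
      = (\<Sum>i\<in>K. \<Sum>j\<in>K. x i * Y i j * x j) - (\<Sum>i\<in>K. \<Sum>j\<in>K. (x i * u i) * (w j * x j) / c)"
    by (simp add: sum_subtractf[symmetric] algebra_simps)
  ultimately show ?thesis by simp
qed

text \<open>The test vector extends x by the value at a that minimises the quadratic form.\<close>
lemma pos_def_on_schur_insert:
  fixes Y :: "'a mat"
  assumes K: "finite K" and a: "a \<notin> K" and pd: "pos_def_on (insert a K) Y"
  shows "pos_def_on K (\<lambda>i j. Y i j - Y i a * Y a j / Y a a)"
  unfolding pos_def_on_def
proof (intro conjI allI impI ballI)
  have Yaa: "Y a a > 0" using pos_def_on_diagonal_pos[OF pd] K by simp
  have sym: "\<And>i j. i \<in> insert a K \<Longrightarrow> j \<in> insert a K \<Longrightarrow> Y i j = Y j i"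
    using pos_def_on_symmetric[OF pd] by blast
  {
    fix i j assume "i \<in> K" "j \<in> K"
    then show "Y i j - Y i a * Y a j / Y a a = Y j i - Y j a * Y a i / Y a a"
      using sym[of i j] sym[of i a] sym[of a j] by simp
  }
  fix x :: "'a \<Rightarrow> real" assume "\<exists>i\<in>K. x i \<noteq> 0"
  then obtain i0 where i0: "i0 \<in> K" "x i0 \<noteq> 0" by blast
  define c where "c = (\<Sum>k\<in>K. Y a k * x k)"
  define q where "q = (\<Sum>i\<in>K. \<Sum>j\<in>K. x i * Y i j * x j)"
  define v where "v = x(a := - c / Y a a)"
  have vK: "(\<Sum>i\<in>K. \<Sum>j\<in>K. v i * Y i j * v j) = q" "(\<Sum>k\<in>K. Y a k * v k) = c"
    using a unfolding v_def q_def c_def by (auto intro!: sum.cong)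
  have "(\<Sum>i\<in>insert a K. \<Sum>j\<in>insert a K. v i * Y i j * v j) = q - c * c / Y a a"
    using quadratic_form_insert[OF K a, of Y v] sym vK Yaa
    by (simp add: v_def field_simps power2_eq_square)
  moreover have "(\<Sum>i\<in>insert a K. \<Sum>j\<in>insert a K. v i * Y i j * v j) > 0"
    by (rule pos_def_on_quadratic_pos[OF pd, of i0]) (use i0 a in \<open>auto simp: v_def\<close>)
  moreover have "(\<Sum>i\<in>K. x i * Y i a) = c"
    unfolding c_def by (rule sum.cong) (use sym in auto)
  then have "(\<Sum>i\<in>K. \<Sum>j\<in>K. x i * (Y i j - Y i a * Y a j / Y a a) * x j) = q - c * c / Y a a"
    unfolding quadratic_form_minus_rank_one q_def c_def by simp
  ultimately show "(\<Sum>i\<in>K. \<Sum>j\<in>K. x i * (Y i j - Y i a * Y a j / Y a a) * x j) > 0"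
    by simp
qed

lemma pos_def_on_solvable:
  fixes Y :: "'a mat"
  assumes "finite K" "pos_def_on K Y"
  shows "\<exists>w. \<forall>i\<in>K. (\<Sum>k\<in>K. Y i k * w k) = b i"
  using assms
proof (induction K arbitrary: Y b rule: finite_induct)
  case empty
  then show ?case by simp
next
  case (insert a K)
  have Yaa: "Y a a > 0"
    using pos_def_on_diagonal_pos[OF insert.prems] insert.hyps by simp
  define Y' where "Y' = (\<lambda>i j. Y i j - Y i a * Y a j / Y a a)"
  have "pos_def_on K Y'"
    unfolding Y'_def by (rule pos_def_on_schur_insert) (use insert in auto)
  then obtain w where w: "\<forall>i\<in>K. (\<Sum>k\<in>K. Y' i k * w k) = b i - Y i a * b a / Y a a"
    using insert.IH[of Y' "\<lambda>i. b i - Y i a * b a / Y a a"] by blast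
  define c where "c = (\<Sum>k\<in>K. Y a k * w k)"
  define wa where "wa = (b a - c) / Y a a"
  have expand: "(\<Sum>k\<in>insert a K. Y i k * (w(a := wa)) k) = Y i a * wa + (\<Sum>k\<in>K. Y i k * w k)"
    for i using insert.hyps by (auto intro!: sum.cong)
  have schur: "(\<Sum>k\<in>K. Y' i k * w k) = (\<Sum>k\<in>K. Y i k * w k) - Y i a / Y a a * c" for i
    unfolding Y'_def c_def
    by (simp add: algebra_simps sum_subtractf sum_distrib_left sum_divide_distrib)
  show ?case
  proof (intro exI ballI)
    fix i assume i: "i \<in> insert a K"
    have "Y i a * wa + (\<Sum>k\<in>K. Y i k * w k) = b i"
    proof (cases "i = a")
      case True
      then show ?thesis using Yaa by (simp add: wa_def c_def field_simps)
    next
      case False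
      then have "i \<in> K" using i by simp
      then have "(\<Sum>k\<in>K. Y i k * w k) = b i - Y i a * b a / Y a a + Y i a / Y a a * c"
        using w schur[of i] by simp
      then show ?thesis using Yaa by (simp add: wa_def diff_divide_distrib algebra_simps)
    qed
    then show "(\<Sum>k\<in>insert a K. Y i k * (w(a := wa)) k) = b i"
      using expand by simp
  qed
qed

lemma pos_def_on_inverse:
  fixes Y :: "'a mat"
  assumes K: "finite K" and pd: "pos_def_on K Y"
  shows "inverse_on K Y (mat_inv_on K Y)"
proof -
  have "\<forall>j. \<exists>w. \<forall>i\<in>K. (\<Sum>k\<in>K. Y i k * w k) = (if i = j then 1 else 0)"
    by (intro allI pos_def_on_solvable[OF K pd])
  then obtain F where F: "\<forall>j. \<forall>i\<in>K. (\<Sum>k\<in>K. Y i k * F j k) = (if i = j then 1 else 0)"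
    by metis
  define W where "W = (\<lambda>k j. F j k)"
  have right: "\<forall>i\<in>K. \<forall>j\<in>K. (\<Sum>k\<in>K. Y i k * W k j) = (if i = j then 1 else 0)"
    using F unfolding W_def by blast
  have "(\<Sum>k\<in>K. W k i * Y k j) = (\<Sum>k\<in>K. Y j k * W k i)" if "i \<in> K" "j \<in> K" for i j
    using pos_def_on_symmetric[OF pd] that by (intro sum.cong) auto
  then have left_transposed: "\<forall>i\<in>K. \<forall>j\<in>K. (\<Sum>k\<in>K. W k i * Y k j) = (if i = j then 1 else 0)"
    using right by auto
  have "W j i = W i j" if "i \<in> K" "j \<in> K" for i j
    using left_inverse_eq_right_inverse_on[OF K left_transposed right that] .
  then have "\<forall>i\<in>K. \<forall>j\<in>K. (\<Sum>k\<in>K. W i k * Y k j) = (if i = j then 1 else 0)"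
    using left_transposed by (metis (no_types, lifting) sum.cong)
  with right show ?thesis
    by (intro inverse_on_mat_inv_on[of K Y W]) (simp add: inverse_on_def)
qed

section \<open>Partially eliminated matrices\<close>

text \<open>For R = M - E: X(R,:) = P(R,:) A, P(R,R) = I and X(R,E) = 0, so that
  X(R,R) = P(R,M) A P(R,M)^T.\<close>
definition partially_eliminated :: "'a set \<Rightarrow> 'a set \<Rightarrow> 'a mat \<Rightarrow> 'a mat \<Rightarrow> 'a mat \<Rightarrow> bool" where
  "partially_eliminated M E P A X \<longleftrightarrow>
     (\<forall>i\<in>M - E. \<forall>k\<in>M - E. P i k = (if i = k then 1 else 0)) \<and>
     (\<forall>i\<in>M - E. \<forall>e\<in>E. X i e = 0) \<and>
     (\<forall>i\<in>M - E. \<forall>j\<in>M. X i j = (\<Sum>k\<in>M. P i k * A k j))"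

lemma partially_eliminated_entry:
  assumes M: "finite M" and X: "partially_eliminated M E P A X"
    and i: "i \<in> M - E" and j: "j \<in> M - E"
  shows "X i j = (\<Sum>k\<in>M. \<Sum>l\<in>M. P i k * A k l * P j l)"
proof -
  have "(\<Sum>l\<in>M. X i l * P j l) = (\<Sum>l\<in>M - E. X i l * P j l)"
    using M X i by (intro sum.mono_neutral_right) (auto simp: partially_eliminated_def)
  also have "\<dots> = (\<Sum>l\<in>M - E. X i l * (if l = j then 1 else 0))"
    using X j by (intro sum.cong) (auto simp: partially_eliminated_def)
  also have "\<dots> = X i j"
    using M j by simp
  finally have "X i j = (\<Sum>l\<in>M. X i l * P j l)" ..
  also have "\<dots> = (\<Sum>l\<in>M. (\<Sum>k\<in>M. P i k * A k l) * P j l)"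
    using X i by (intro sum.cong) (auto simp: partially_eliminated_def)
  also have "\<dots> = (\<Sum>l\<in>M. \<Sum>k\<in>M. P i k * A k l * P j l)"
    by (simp add: sum_distrib_right)
  also have "\<dots> = (\<Sum>k\<in>M. \<Sum>l\<in>M. P i k * A k l * P j l)"
    by (rule sum.swap)
  finally show ?thesis .
qed

lemma partially_eliminated_symmetric:
  assumes M: "finite M" and pdA: "pos_def_on M A"
    and X: "partially_eliminated M E P A X" and i: "i \<in> M - E" and j: "j \<in> M - E"
  shows "X i j = X j i"
proof -
  have "X i j = (\<Sum>k\<in>M. \<Sum>l\<in>M. P i k * A k l * P j l)"
    by (rule partially_eliminated_entry[OF M X i j])
  also have "\<dots> = (\<Sum>l\<in>M. \<Sum>k\<in>M. P i k * A k l * P j l)"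
    by (rule sum.swap)
  also have "\<dots> = (\<Sum>l\<in>M. \<Sum>k\<in>M. P j l * A l k * P i k)"
    by (intro sum.cong refl) (use pos_def_on_symmetric[OF pdA] in auto)
  also have "\<dots> = X j i"
    using partially_eliminated_entry[OF M X j i] by simp
  finally show ?thesis .
qed

lemma pos_def_on_partially_eliminated:
  assumes M: "finite M" and pdA: "pos_def_on M A"
    and X: "partially_eliminated M E P A X" and K: "K \<subseteq> M - E"
  shows "pos_def_on K X"
  unfolding pos_def_on_def
proof (intro conjI ballI allI impI)
  fix i j assume "i \<in> K" "j \<in> K"
  then show "X i j = X j i"
    using partially_eliminated_symmetric[OF M pdA X] K by blast
next
  fix x :: "'a \<Rightarrow> real" assume "\<exists>i\<in>K. x i \<noteq> 0"
  then obtain i0 where i0: "i0 \<in> K" "x i0 \<noteq> 0" by blast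
  have fK: "finite K" using K M finite_subset by blast
  define w where "w = (\<lambda>k. \<Sum>i\<in>K. x i * P i k)"
  have "(\<Sum>i\<in>K. \<Sum>j\<in>K. x i * X i j * x j)
      = (\<Sum>i\<in>K. \<Sum>j\<in>K. x i * (\<Sum>k\<in>M. \<Sum>l\<in>M. P i k * A k l * P j l) * x j)"
    using partially_eliminated_entry[OF M X] K by (intro sum.cong refl) auto
  also have "\<dots> = (\<Sum>i\<in>K. \<Sum>j\<in>K. \<Sum>k\<in>M. \<Sum>l\<in>M. (x i * P i k) * A k l * (x j * P j l))"
    by (simp add: sum_distrib_left sum_distrib_right mult_ac)
  also have "\<dots> = (\<Sum>k\<in>M. \<Sum>l\<in>M. \<Sum>i\<in>K. \<Sum>j\<in>K. (x i * P i k) * A k l * (x j * P j l))"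
    by (rule sum_swap_pairs)
  also have "\<dots> = (\<Sum>k\<in>M. \<Sum>l\<in>M. w k * A k l * w l)"
    unfolding w_def by (simp add: sum_distrib_left sum_distrib_right mult_ac)
  finally have quadratic: "(\<Sum>i\<in>K. \<Sum>j\<in>K. x i * X i j * x j) = (\<Sum>k\<in>M. \<Sum>l\<in>M. w k * A k l * w l)" .
  have "\<forall>i\<in>K. P i i0 = (if i = i0 then 1 else 0)"
    using X K i0 unfolding partially_eliminated_def by blast
  then have "w i0 = (\<Sum>i\<in>K. x i * (if i = i0 then 1 else 0))"
    unfolding w_def by (intro sum.cong) auto
  then have "w i0 \<noteq> 0" using fK i0 by simp
  then show "(\<Sum>i\<in>K. \<Sum>j\<in>K. x i * X i j * x j) > 0"
    unfolding quadratic using pos_def_on_quadratic_pos[OF pdA] i0 K by blast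
qed

section \<open>One block elimination step\<close>

lemma inverse_on_one_plus_square_zero:
  fixes N :: "'a mat"
  assumes M: "finite M" and square_zero: "\<And>i j. i \<in> M \<Longrightarrow> j \<in> M \<Longrightarrow> (\<Sum>k\<in>M. N i k * N k j) = 0"
  shows "inverse_on M (\<lambda>i j. (if i = j then 1 else 0) + N i j) (\<lambda>i j. (if i = j then 1 else 0) - N i j)"
  unfolding inverse_on_def
  using M square_zero
  by (simp add: sum.distrib sum_subtractf distrib_left distrib_right left_diff_distrib right_diff_distrib)

lemma mat_mult_on_elimination_inverse:
  fixes X Lc :: "'a mat"
  assumes M: "finite M" and SM: "S \<subseteq> M" and BS: "B \<inter> S = {}" and i: "i \<in> M"
  shows "mat_mult_on M (mat_inv_on M
           (\<lambda>i j. if i \<in> B \<and> j \<in> S then Lc i j else (if i = j then 1 else 0))) X i j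
       = X i j - (if i \<in> B then \<Sum>s\<in>S. Lc i s * X s j else 0)"
proof -
  define N where "N = (\<lambda>i j. if i \<in> B \<and> j \<in> S then Lc i j else (0::real))"
  define L where "L = (\<lambda>i j. (if i = j then 1 else 0) + N i j)"
  have L_eq: "(\<lambda>i j. if i \<in> B \<and> j \<in> S then Lc i j else (if i = j then 1 else 0)) = L"
    using BS by (auto simp: L_def N_def fun_eq_iff)
  define R where "R = (\<lambda>i j. (if i = j then 1 else 0) - N i j)"
  have right: "inverse_on M L R"
    unfolding L_def R_def using M BS
    by (intro inverse_on_one_plus_square_zero sum.neutral) (auto simp: N_def)
  then have inv: "inverse_on M L (mat_inv_on M L)"
    by (rule inverse_on_mat_inv_on)
  have "mat_inv_on M L i k = R i k" if "k \<in> M" for k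
    using inv right left_inverse_eq_right_inverse_on[OF M _ _ i that, of "mat_inv_on M L" L R]
    unfolding inverse_on_def by blast
  then have "mat_mult_on M (mat_inv_on M L) X i j = (\<Sum>k\<in>M. ((if i = k then 1 else 0) - N i k) * X k j)"
    unfolding mat_mult_on_def R_def by (intro sum.cong) auto
  also have "\<dots> = X i j - (\<Sum>k\<in>M. N i k * X k j)"
    using M i by (simp add: left_diff_distrib sum_subtractf)
  also have "(\<Sum>k\<in>M. N i k * X k j) = (if i \<in> B then \<Sum>s\<in>S. Lc i s * X s j else 0)"
    using M SM unfolding N_def
    by (simp add: if_distrib[of "\<lambda>c. c * _"] sum.inter_restrict[symmetric] Int_absorb1 cong: if_cong)
  finally show ?thesis
    unfolding L_eq .
qed

section \<open>Cluster trees\<close>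

lemma sub_append: "sub U (p @ q) = (case sub U p of None \<Rightarrow> None | Some s \<Rightarrow> sub s q)"
  by (induction U p rule: sub.induct) auto

lemma wf_ctree_sub: "wf_ctree U \<Longrightarrow> sub U p = Some s \<Longrightarrow> wf_ctree s \<and> cl s \<subseteq> cl U"
  by (induction U p rule: sub.induct) (auto split: if_splits)

lemma sub_prefix_or_disjoint:
  assumes "wf_ctree U" "sub U p = Some s1" "sub U q = Some s2"
  shows "(\<exists>x. q = p @ x) \<or> (\<exists>x. p = q @ x) \<or> cl s1 \<inter> cl s2 = {}"
  using assms
proof (induction p arbitrary: U q)
  case Nil
  then show ?case by simp
next
  case (Cons a p')
  show ?case
  proof (cases q)
    case Nil
    then show ?thesis by simp
  next
    case (Cons b q')
    obtain C l r where U: "U = CNode C l r"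
      using Cons.prems(2) by (cases U) auto
    show ?thesis
    proof (cases "a = b")
      case True
      then show ?thesis
        using Cons.IH[of "if a then r else l" q'] Cons.prems U \<open>q = b # q'\<close> by auto
    next
      case False
      have "cl s1 \<subseteq> cl (if a then r else l)" "cl s2 \<subseteq> cl (if b then r else l)"
        using wf_ctree_sub[of "if a then r else l" p' s1] wf_ctree_sub[of "if b then r else l" q' s2]
          Cons.prems U \<open>q = b # q'\<close> by auto
      then show ?thesis
        using False Cons.prems(1) U by (cases a; cases b) auto
    qed
  qed
qed

lemma Cg_append_subset:
  assumes wf: "wf_ctree U" and n: "d @ x \<in> nodes U"
  shows "Cg U (d @ x) \<subseteq> Cg U d"
proof -
  obtain s s' where s: "sub U d = Some s" and s': "sub s x = Some s'"
    using n unfolding nodes_def by (auto simp: sub_append split: option.splits)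
  then have "cl s' \<subseteq> cl s"
    using wf_ctree_sub[OF wf s] wf_ctree_sub[of s x s'] by blast
  then show ?thesis
    unfolding Cg_def using s s' by (simp add: sub_append)
qed

lemma Cg_subset_cl: "wf_ctree U \<Longrightarrow> d \<in> nodes U \<Longrightarrow> Cg U d \<subseteq> cl U"
  unfolding nodes_def Cg_def using wf_ctree_sub by fastforce

lemma nodes_prefix_or_Cg_disjoint:
  assumes wf: "wf_ctree U" and "d \<in> nodes U" "d' \<in> nodes U"
  shows "(\<exists>x. d' = d @ x) \<or> (\<exists>x. d = d' @ x) \<or> Cg U d \<inter> Cg U d' = {}"
proof -
  obtain s s' where "sub U d = Some s" "sub U d' = Some s'"
    using assms unfolding nodes_def by auto
  with sub_prefix_or_disjoint[OF wf this] show ?thesis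
    unfolding Cg_def by simp
qed

lemma Ig_Bg_disjoint: "Ig M A U d \<inter> Bg M A U d = {}"
  and Ig_subset_Cg: "Ig M A U d \<subseteq> Cg U d"
  and Bg_subset_Cg: "Bg M A U d \<subseteq> Cg U d"
  and Sg_subset_Ig: "Sg M A U d \<subseteq> Ig M A U d"
  unfolding Ig_def Bg_def Sg_def inner_def bnd_def by auto

lemma Ig_mono: "Cg U d \<subseteq> Cg U d' \<Longrightarrow> Ig M A U d \<subseteq> Ig M A U d'"
  unfolding Ig_def inner_def bnd_def by blast

lemma Ig_entry_zero: "k \<in> Ig M A U d \<Longrightarrow> j \<in> M - Cg U d \<Longrightarrow> A k j = 0"
  unfolding Ig_def inner_def bnd_def by auto

lemma sub_CNode:
  assumes "sub U d = Some (CNode C l r)"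
  shows "\<not> is_leaf_path U d" "sub U (d @ [False]) = Some l" "sub U (d @ [True]) = Some r"
  using assms unfolding is_leaf_path_def by (auto simp: sub_append)

lemma Sg_disjoint_descendant:
  assumes wf: "wf_ctree U" and n: "d @ (c # x) \<in> nodes U"
  shows "Sg M A U d \<inter> Sg M A U (d @ (c # x)) = {}"
proof -
  obtain s where s: "sub U d = Some s" and "sub s (c # x) \<noteq> None"
    using n unfolding nodes_def by (auto simp: sub_append split: option.splits)
  then obtain C l r where "s = CNode C l r" by (cases s) auto
  then have "\<not> is_leaf_path U d" using sub_CNode s by blast
  then have "Sg M A U d \<inter> Ig M A U (d @ [c]) = {}" unfolding Sg_def by (cases c) auto
  moreover have "Cg U ((d @ [c]) @ x) \<subseteq> Cg U (d @ [c])"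
    using Cg_append_subset[OF wf, of "d @ [c]" x] n by simp
  then have "Sg M A U (d @ (c # x)) \<subseteq> Ig M A U (d @ [c])"
    using Ig_mono Sg_subset_Ig by fastforce
  ultimately show ?thesis by blast
qed

lemma Sg_disjoint:
  assumes wf: "wf_ctree U" and d: "d \<in> nodes U" and d': "d' \<in> nodes U" and "d \<noteq> d'"
  shows "Sg M A U d \<inter> Sg M A U d' = {}"
proof -
  have "(\<exists>c x. d' = d @ (c # x)) \<or> (\<exists>c x. d = d' @ (c # x)) \<or> Cg U d \<inter> Cg U d' = {}"
    using nodes_prefix_or_Cg_disjoint[OF wf d d'] \<open>d \<noteq> d'\<close> by (metis append_Nil2 neq_Nil_conv)
  moreover have "Sg M A U d \<inter> Sg M A U d' = {}" if "Cg U d \<inter> Cg U d' = {}"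
    using that Sg_subset_Ig[of M A U] Ig_subset_Cg[of M A U] by blast
  ultimately show ?thesis
    using Sg_disjoint_descendant[OF wf] d d' by blast
qed

definition descendants :: "'a ctree \<Rightarrow> bool list \<Rightarrow> bool list set" where
  "descendants U d = {f \<in> nodes U. \<exists>x. f = d @ x}"

lemma Ig_subset_Sg_descendants:
  "sub U e = Some s \<Longrightarrow> Ig M A U e \<subseteq> (\<Union>f\<in>descendants U e. Sg M A U f)"
proof (induction s arbitrary: e)
  case (CLeaf C)
  then have "e \<in> descendants U e" "Sg M A U e = Ig M A U e"
    unfolding descendants_def nodes_def Sg_def is_leaf_path_def by auto
  then show ?case by blast
next
  case (CNode C l r)
  note children = sub_CNode[OF CNode.prems]
  have grandchildren: "(\<Union>f\<in>descendants U (e @ [c]). Sg M A U f) \<subseteq> (\<Union>f\<in>descendants U e. Sg M A U f)"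
    for c unfolding descendants_def by (intro UN_mono) auto
  have "Ig M A U (e @ [False]) \<subseteq> (\<Union>f\<in>descendants U e. Sg M A U f)"
    using CNode.IH(1)[OF children(2)] grandchildren by (rule order.trans)
  moreover have "Ig M A U (e @ [True]) \<subseteq> (\<Union>f\<in>descendants U e. Sg M A U f)"
    using CNode.IH(2)[OF children(3)] grandchildren by (rule order.trans)
  moreover have "e \<in> descendants U e"
    using CNode.prems unfolding descendants_def nodes_def by auto
  then have "Sg M A U e \<subseteq> (\<Union>f\<in>descendants U e. Sg M A U f)"
    by (rule UN_upper)
  moreover have "Ig M A U e \<subseteq> Sg M A U e \<union> Ig M A U (e @ [False]) \<union> Ig M A U (e @ [True])"
    using children(1) unfolding Sg_def by auto
  ultimately show ?case by blast
qed

lemma wf_ctree_aug_acc: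
  "wf_ctree t \<Longrightarrow> wf_ctree Ot \<Longrightarrow> cl t \<subseteq> M \<Longrightarrow> cl Ot = M - cl t \<Longrightarrow> sub t q \<noteq> None \<Longrightarrow>
   wf_ctree (aug_acc M t q Ot) \<and> cl (aug_acc M t q Ot) \<subseteq> M"
proof (induction q arbitrary: t Ot)
  case Nil
  then show ?case by simp
next
  case (Cons c q)
  then obtain C l r where t: "t = CNode C l r" by (cases t) auto
  let ?a = "if c then r else l" and ?s = "if c then l else r"
  have "wf_ctree (CNode (M - cl ?a) ?s Ot)"
    using Cons.prems t by auto
  then have "wf_ctree (aug_acc M ?a q (CNode (M - cl ?a) ?s Ot)) \<and>
      cl (aug_acc M ?a q (CNode (M - cl ?a) ?s Ot)) \<subseteq> M"
    by (intro Cons.IH) (use Cons.prems t in auto)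
  then show ?case using t by (cases c) simp_all
qed

lemma wf_ctree_aug:
  assumes T: "cluster_tree M T" and p: "is_leaf_path T p"
  shows "wf_ctree (aug M T p) \<and> cl (aug M T p) \<subseteq> M"
proof (cases p)
  case Nil
  then show ?thesis by simp
next
  case (Cons c q)
  obtain C0 where "sub T p = Some (CLeaf C0)"
    using p unfolding is_leaf_path_def by blast
  moreover from this obtain C l r where "T = CNode C l r"
    using Cons by (cases T) auto
  ultimately have "wf_ctree (aug_acc M (child c T) q (child (\<not> c) T)) \<and>
      cl (aug_acc M (child c T) q (child (\<not> c) T)) \<subseteq> M"
    using T Cons by (intro wf_ctree_aug_acc) (auto simp: cluster_tree_def)
  then show ?thesis
    using Cons by simp
qed

section \<open>Elimination along a consistent ordering\<close>

locale elimination =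
  fixes M :: "'a set" and A :: "'a mat" and U :: "'a ctree" and gs :: "bool list list"
  assumes finite_M: "finite M" and pos_def_A: "pos_def_on M A"
    and wf_U: "wf_ctree U" and cl_U: "cl U \<subseteq> M"
    and consistent: "consistent_ordering U gs"
begin

abbreviation X :: "nat \<Rightarrow> 'a mat" where "X t \<equiv> A_at M A U gs t"
abbreviation S :: "nat \<Rightarrow> 'a set" where "S t \<equiv> Sg M A U (gs ! t)"
abbreviation B :: "nat \<Rightarrow> 'a set" where "B t \<equiv> Bg M A U (gs ! t)"
abbreviation L :: "nat \<Rightarrow> 'a mat" where "L t \<equiv> mat_mult_on (S t) (X t) (mat_inv_on (S t) (X t))"

definition eliminated :: "nat \<Rightarrow> 'a set" where
  "eliminated t = (\<Union>t'<t. S t')"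

lemma gs_node: "t < length gs \<Longrightarrow> gs ! t \<in> nodes U"
  using consistent nth_mem unfolding consistent_ordering_def by blast

lemma gs_descendant_before:
  "i < length gs \<Longrightarrow> j < length gs \<Longrightarrow> gs ! j = gs ! i @ x \<Longrightarrow> x \<noteq> [] \<Longrightarrow> j < i"
  using consistent unfolding consistent_ordering_def by blast

lemma Cg_node_subset: "d \<in> nodes U \<Longrightarrow> Cg U d \<subseteq> M"
  using Cg_subset_cl[OF wf_U] cl_U by blast

lemma S_subset: "t < length gs \<Longrightarrow> S t \<subseteq> M"
  using Cg_node_subset[OF gs_node] Sg_subset_Ig[of M A U "gs ! t"] Ig_subset_Cg[of M A U "gs ! t"]
  by blast

lemma B_subset: "t < length gs \<Longrightarrow> B t \<subseteq> M"
  using Cg_node_subset[OF gs_node] Bg_subset_Cg[of M A U "gs ! t"] by blast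

lemma B_S_disjoint: "B t \<inter> S t = {}"
  using Sg_subset_Ig[of M A U "gs ! t"] Ig_Bg_disjoint[of M A U "gs ! t"] by blast

lemma eliminated_Suc: "eliminated (Suc t) = eliminated t \<union> S t"
  unfolding eliminated_def by (auto simp: lessThan_Suc)

lemma S_disjoint_eliminated:
  assumes t: "t < length gs"
  shows "S t \<inter> eliminated t = {}"
proof -
  have "S t \<inter> S t' = {}" if "t' < t" for t'
    using Sg_disjoint[OF wf_U gs_node[OF t] gs_node] consistent that t
    by (simp add: consistent_ordering_def nth_eq_iff_index_eq)
  then show ?thesis
    unfolding eliminated_def by blast
qed

lemma B_disjoint_eliminated:
  assumes t: "t < length gs"
  shows "B t \<inter> eliminated t = {}"
proof -
  have "B t \<inter> S t' = {}" if t': "t' < t" for t'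
  proof -
    have t'_len: "t' < length gs" using t t' by simp
    have "gs ! t' \<noteq> gs ! t"
      using consistent t t' by (simp add: consistent_ordering_def nth_eq_iff_index_eq)
    then have not_ancestor: "\<nexists>x. gs ! t = gs ! t' @ x"
      using gs_descendant_before[OF t'_len t] t' by fastforce
    have "S t' \<subseteq> Ig M A U (gs ! t)" if "gs ! t' = gs ! t @ x" for x
    proof -
      have "Cg U (gs ! t') \<subseteq> Cg U (gs ! t)"
        using Cg_append_subset[OF wf_U, of "gs ! t" x] gs_node[OF t'_len] that by simp
      then show ?thesis
        using Ig_mono[of U "gs ! t'" "gs ! t" M A] Sg_subset_Ig[of M A U "gs ! t'"] by blast
    qed
    then show ?thesis
      using nodes_prefix_or_Cg_disjoint[OF wf_U gs_node[OF t] gs_node[OF t'_len]] not_ancestor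
        Ig_Bg_disjoint[of M A U "gs ! t"] Bg_subset_Cg[of M A U "gs ! t"]
        Sg_subset_Ig[of M A U "gs ! t'"] Ig_subset_Cg[of M A U "gs ! t'"] by blast
  qed
  then show ?thesis
    unfolding eliminated_def by blast
qed

lemma Ig_minus_S_eliminated:
  assumes t: "t < length gs"
  shows "Ig M A U (gs ! t) - S t \<subseteq> eliminated t"
proof
  fix y assume y: "y \<in> Ig M A U (gs ! t) - S t"
  obtain s where s: "sub U (gs ! t) = Some s"
    using gs_node[OF t] unfolding nodes_def by auto
  then obtain C l r where "s = CNode C l r"
    using y unfolding Sg_def is_leaf_path_def by (cases s) auto
  note children = sub_CNode[OF s[unfolded this]]
  have "y \<in> Ig M A U (gs ! t @ [False]) \<union> Ig M A U (gs ! t @ [True])"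
    using y children(1) unfolding Sg_def by auto
  then obtain c where c: "y \<in> Ig M A U (gs ! t @ [c])" by blast
  obtain s' where "sub U (gs ! t @ [c]) = Some s'"
    using children(2,3) by (cases c) auto
  with c obtain f where f: "f \<in> descendants U (gs ! t @ [c])" "y \<in> Sg M A U f"
    using Ig_subset_Sg_descendants by blast
  then obtain j where j: "j < length gs" "gs ! j = f"
    using consistent unfolding descendants_def consistent_ordering_def
    by (metis (no_types, lifting) in_set_conv_nth mem_Collect_eq)
  moreover obtain x where "f = gs ! t @ c # x"
    using f(1) unfolding descendants_def by auto
  ultimately have "j < t"
    using gs_descendant_before[OF t] by blast
  then show "y \<in> eliminated t"
    using f j unfolding eliminated_def by blast
qed

lemma X_Suc_entry:
  assumes t: "t < length gs" and i: "i \<in> M"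
  shows "X (Suc t) i j = X t i j - (if i \<in> B t then \<Sum>s\<in>S t. L t i s * X t s j else 0)"
  using mat_mult_on_elimination_inverse[OF finite_M S_subset[OF t] B_S_disjoint i]
  unfolding A_at_def by (simp add: take_Suc_conv_app_nth t elim_step_def Let_def)

lemma S_subset_uneliminated: "t < length gs \<Longrightarrow> S t \<subseteq> M - eliminated t"
  using S_subset S_disjoint_eliminated by blast

lemma finite_S: "t < length gs \<Longrightarrow> finite (S t)"
  using S_subset finite_M finite_subset by blast

lemma inverse_on_S:
  assumes t: "t < length gs" and reduced: "partially_eliminated M (eliminated t) P A (X t)"
  shows "inverse_on (S t) (X t) (mat_inv_on (S t) (X t))"
proof (rule pos_def_on_inverse)
  show "finite (S t)"
    using finite_S[OF t] .
  show "pos_def_on (S t) (X t)"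
    using pos_def_on_partially_eliminated[OF finite_M pos_def_A reduced] S_subset_uneliminated t
    by simp
qed

definition local_rows :: "nat \<Rightarrow> bool" where
  "local_rows t \<longleftrightarrow>
     (\<forall>d\<in>nodes U. \<forall>i\<in>(M - eliminated t) \<inter> Ig M A U d. \<forall>j\<in>M - Cg U d. X t i j = 0)"

lemma X_Suc_eliminated_column:
  assumes t: "t < length gs" and reduced: "partially_eliminated M (eliminated t) P A (X t)"
    and local: "local_rows t" and i: "i \<in> M - eliminated (Suc t)" and e: "e \<in> eliminated (Suc t)"
  shows "X (Suc t) i e = 0"
proof -
  have SR: "S t \<subseteq> M - eliminated t" using S_subset_uneliminated[OF t] .
  have iR: "i \<in> M - eliminated t" "i \<notin> S t" using i eliminated_Suc by auto
  consider (old) "e \<in> eliminated t" | (new) "e \<in> S t"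
    using e eliminated_Suc by auto
  then show ?thesis
  proof cases
    case old
    then have "X t i e = 0" "\<forall>s\<in>S t. X t s e = 0"
      using reduced iR SR unfolding partially_eliminated_def by auto
    then show ?thesis using X_Suc_entry[OF t] iR by simp
  next
    case new
    show ?thesis
    proof (cases "i \<in> B t")
      case True
      have "(\<Sum>s\<in>S t. L t i s * X t s e)
          = (\<Sum>k\<in>S t. X t i k * (\<Sum>s\<in>S t. mat_inv_on (S t) (X t) k s * X t s e))"
        unfolding mat_mult_on_def by (rule sum_mult_sum_swap[symmetric])
      also have "\<dots> = X t i e"
        using inverse_on_S[OF t reduced] new finite_S[OF t]
        unfolding inverse_on_def by (simp cong: sum.cong)
      finally show ?thesis using X_Suc_entry[OF t] True iR by simp
    next
      case False
      have "i \<notin> Cg U (gs ! t)"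
      proof
        assume "i \<in> Cg U (gs ! t)"
        then have "i \<in> Ig M A U (gs ! t)"
          using False unfolding Ig_def Bg_def inner_def by blast
        then show False
          using Ig_minus_S_eliminated[OF t] iR by blast
      qed
      then have "X t e i = 0"
        using local new SR iR gs_node[OF t] Sg_subset_Ig[of M A U "gs ! t"]
        unfolding local_rows_def by blast
      moreover have "X t i e = X t e i"
        using partially_eliminated_symmetric[OF finite_M pos_def_A reduced] iR new SR t
        by auto
      ultimately show ?thesis using X_Suc_entry[OF t] False iR by simp
    qed
  qed
qed

lemma partially_eliminated_Suc:
  assumes t: "t < length gs" and reduced: "partially_eliminated M (eliminated t) P A (X t)"
    and local: "local_rows t"
  shows "partially_eliminated M (eliminated (Suc t))
           (\<lambda>i k. P i k - (if i \<in> B t then \<Sum>s\<in>S t. L t i s * P s k else 0)) A (X (Suc t))"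
  unfolding partially_eliminated_def
proof (intro conjI ballI)
  have SR: "S t \<subseteq> M - eliminated t" using S_subset_uneliminated[OF t] .
  fix i assume i: "i \<in> M - eliminated (Suc t)"
  then have iR: "i \<in> M - eliminated t" using eliminated_Suc by auto
  {
    fix k assume k: "k \<in> M - eliminated (Suc t)"
    then have "\<forall>s\<in>S t. P s k = 0"
      using reduced SR eliminated_Suc unfolding partially_eliminated_def by auto
    then show "P i k - (if i \<in> B t then \<Sum>s\<in>S t. L t i s * P s k else 0) = (if i = k then 1 else 0)"
      using reduced iR k eliminated_Suc unfolding partially_eliminated_def by auto
  next
    fix e assume "e \<in> eliminated (Suc t)"
    then show "X (Suc t) i e = 0"
      by (rule X_Suc_eliminated_column[OF t reduced local i])
  next
    fix j assume j: "j \<in> M"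
    have "(\<Sum>s\<in>S t. L t i s * X t s j) = (\<Sum>s\<in>S t. L t i s * (\<Sum>k\<in>M. P s k * A k j))"
      using reduced SR j unfolding partially_eliminated_def by (intro sum.cong) auto
    also have "\<dots> = (\<Sum>k\<in>M. (\<Sum>s\<in>S t. L t i s * P s k) * A k j)"
      by (rule sum_mult_sum_swap)
    finally show "X (Suc t) i j
        = (\<Sum>k\<in>M. (P i k - (if i \<in> B t then \<Sum>s\<in>S t. L t i s * P s k else 0)) * A k j)"
      using X_Suc_entry[OF t] reduced iR j unfolding partially_eliminated_def
      by (simp add: left_diff_distrib sum_subtractf)
  }
qed

lemma Cg_subset_of_boundary_inner:
  assumes t: "t < length gs" and d: "d \<in> nodes U"
    and i: "i \<in> Ig M A U d" "i \<in> B t"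
  shows "Cg U (gs ! t) \<subseteq> Cg U d"
proof -
  have "\<not> Cg U d \<subseteq> Cg U (gs ! t)"
    using Ig_mono[of U d "gs ! t" M A] Ig_Bg_disjoint[of M A U "gs ! t"] i by blast
  moreover have "Cg U d \<inter> Cg U (gs ! t) \<noteq> {}"
    using i Ig_subset_Cg[of M A U d] Bg_subset_Cg[of M A U "gs ! t"] by blast
  moreover have "Cg U d \<subseteq> Cg U (gs ! t)" if "d = gs ! t @ x" for x
    using Cg_append_subset[OF wf_U, of "gs ! t" x] d that by simp
  ultimately obtain x where "gs ! t = d @ x"
    using nodes_prefix_or_Cg_disjoint[OF wf_U d gs_node[OF t]] by blast
  then show ?thesis
    using Cg_append_subset[OF wf_U, of d x] gs_node[OF t] by simp
qed

lemma local_rows_Suc: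
  assumes t: "t < length gs" and local: "local_rows t"
  shows "local_rows (Suc t)"
  unfolding local_rows_def
proof (intro ballI)
  fix d i j assume d: "d \<in> nodes U" and i: "i \<in> (M - eliminated (Suc t)) \<inter> Ig M A U d"
    and j: "j \<in> M - Cg U d"
  have iR: "i \<in> M - eliminated t" using i eliminated_Suc by auto
  have "X t i j = 0"
    using local d iR i j unfolding local_rows_def by blast
  moreover have "X t s j = 0" if "i \<in> B t" "s \<in> S t" for s
  proof -
    have "j \<in> M - Cg U (gs ! t)"
      using Cg_subset_of_boundary_inner[OF t d] i j that by blast
    moreover have "s \<in> (M - eliminated t) \<inter> Ig M A U (gs ! t)"
      using S_subset_uneliminated[OF t] Sg_subset_Ig[of M A U "gs ! t"] that by blast
    ultimately show ?thesis
      using local gs_node[OF t] unfolding local_rows_def by blast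
  qed
  ultimately show "X (Suc t) i j = 0"
    using X_Suc_entry[OF t] i by auto
qed

lemma elimination_invariant:
  "t \<le> length gs \<Longrightarrow> \<exists>P. partially_eliminated M (eliminated t) P A (X t) \<and> local_rows t"
proof (induction t)
  case 0
  have "partially_eliminated M (eliminated 0) (\<lambda>i k. if i = k then 1 else 0) A (X 0)"
    using finite_M by (simp add: partially_eliminated_def eliminated_def A_at_def)
  moreover have "local_rows 0"
    by (auto simp: local_rows_def eliminated_def A_at_def intro: Ig_entry_zero)
  ultimately show ?case by blast
next
  case (Suc t)
  then obtain P where "partially_eliminated M (eliminated t) P A (X t)" "local_rows t"
    by auto
  then show ?case
    using partially_eliminated_Suc local_rows_Suc Suc.prems by (meson Suc_le_lessD)
qed

lemma X_Suc_schur_U: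
  assumes t: "t < length gs" and i: "i \<in> B t"
  shows "X (Suc t) i j = schur_U M A U (X t) (gs ! t) i j"
proof -
  have "(\<Sum>s\<in>S t. L t i s * X t s j)
      = (\<Sum>s\<in>S t. \<Sum>k\<in>S t. X t i k * mat_inv_on (S t) (X t) k s * X t s j)"
    unfolding mat_mult_on_def by (simp add: sum_distrib_right)
  also have "\<dots> = (\<Sum>k\<in>S t. \<Sum>s\<in>S t. X t i k * mat_inv_on (S t) (X t) k s * X t s j)"
    by (rule sum.swap)
  finally show ?thesis
    using X_Suc_entry[OF t] B_subset[OF t] i unfolding schur_U_def Let_def by auto
qed

lemma pos_def_on_schur_U:
  assumes t: "t < length gs"
  shows "pos_def_on (B t) (schur_U M A U (X t) (gs ! t))"
proof (rule pos_def_on_cong)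
  obtain P where reduced: "partially_eliminated M (eliminated (Suc t)) P A (X (Suc t))"
    using elimination_invariant[of "Suc t"] t by auto
  have "B t \<subseteq> M - eliminated (Suc t)"
    using B_subset[OF t] B_disjoint_eliminated[OF t] B_S_disjoint eliminated_Suc by blast
  then show "pos_def_on (B t) (X (Suc t))"
    using pos_def_on_partially_eliminated[OF finite_M pos_def_A reduced] t by simp
  show "\<forall>i\<in>B t. \<forall>j\<in>B t. X (Suc t) i j = schur_U M A U (X t) (gs ! t) i j"
    using X_Suc_schur_U[OF t] by blast
qed

end

theorem mainTheorem2:
  fixes M :: "'a set" and A :: "'a mat" and T :: "'a ctree"
    and p :: "bool list" and gs :: "bool list list" and t :: nat
  assumes "finite M"
    and "pos_def_on M A"
    and "cluster_tree M T"
    and "is_leaf_path T p"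
    and "consistent_ordering (aug M T p) gs"
    and "t < length gs"
  shows "pos_def_on (Bg M A (aug M T p) (gs ! t))
           (schur_U M A (aug M T p) (A_at M A (aug M T p) gs t) (gs ! t))"
proof -
  interpret elimination M A "aug M T p" gs
    using assms wf_ctree_aug[OF assms(3,4)] by unfold_locales auto
  show ?thesis
    using pos_def_on_schur_U[OF assms(6)] .
qed

end
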